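(* Let $m,k_1,k_2$ be integers with $m\ge 2$. There exists a set $A\subseteq\mathbb{Z}_m$ such that $\hat{r}_{k_1,k_2}(A,n)=\hat{r}_{k_1,k_2}(\mathbb{Z}_m\setminus A,n)$ for all $n\in\mathbb{Z}_m$ if and only if $m$ is even and one of the following holds: (i) $k_1$ and $k_2$ have the same parity; (ii) $k_1$ and $k_2$ have different parities and $v_2(k_i)<v_2(m)$ for $i=1,2$.
   Context: $\mathbb{Z}_m$ denotes the set of residue classes modulo $m$. For integers $k_1,k_2$, a set $A\subseteq\mathbb{Z}_m$ and $n\in\mathbb{Z}_m$, $\hat{r}_{k_1,k_2}(A,n)$ denotes the number of ordered pairs $(a_1,a_2)\in A\times A$ with $n=k_1a_1+k_2a_2$ in $\mathbb{Z}_m$. For a nonzero integer $k$, $v_2(k)=t$ means $2^t\mid k$ and $2^{t+1}\nmid k$; by convention $v_2(0)=+\infty$. *)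

theory Defs
  imports Main "HOL-Library.Extended_Nat" "HOL-Computational_Algebra.Primes"
begin

text \<open>Z_m is modelled by the canonical residues {0..<m} of int, arithmetic taken mod m.\<close>

definition Zmod :: "int \<Rightarrow> int set" where
  "Zmod m = {0..<m}"

definition rhat :: "int \<Rightarrow> int \<Rightarrow> int \<Rightarrow> int set \<Rightarrow> int \<Rightarrow> nat" where
  "rhat m k1 k2 A n = card {(a1, a2). a1 \<in> A \<and> a2 \<in> A \<and> (k1 * a1 + k2 * a2) mod m = n mod m}"

definition v2 :: "int \<Rightarrow> enat" where
  "v2 k = (if k = 0 then \<infinity> else enat (multiplicity (2::int) k))"

end

theory Submission
  imports Defs
begin

(* Write B = Z_m - A.  A set A is "balanced" for (k1,k2) when A and B have the same
   representation function.

   Necessity.  Summing r(A,n) over all n counts A x A, so |A|^2 = |B|^2 and m = 2|A| is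
   even.  More generally, if q | m, q | k2 and q is coprime to k1, then k1 a1 + k2 a2 is
   divisible by q exactly when a1 is, so summing over the multiples n of q gives
   |A| |A \<inter> qZ| = |B| |B \<inter> qZ|; hence A and B split the m/q multiples of q evenly.  For k1 odd,
   k2 even and q = 2^v2(m) dividing k2 this makes m/q even, which is absurd.

   Sufficiency.  Take A = {0..<h}, B = {h..<2h}, m = 2h.  Equality of the representation
   functions follows from bijections f, g : A -> B with k1 f(x) + k2 g(y) = k1 x + k2 y in Z_m.
   We use f(x) = x + h and g(y) = ((y + c) mod h) + h: when k1, k2 have the same parity
   c = 0 works; when k1 is odd, k2 even and v2(k2) < v2(m), we choose c with k2 c = h (mod m),
   which exists because gcd(k2, m) divides h. *)

definition balanced :: "int \<Rightarrow> int \<Rightarrow> int \<Rightarrow> int set \<Rightarrow> bool" where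
  "balanced m k1 k2 A \<longleftrightarrow>
     A \<subseteq> Zmod m \<and> (\<forall>n \<in> Zmod m. rhat m k1 k2 A n = rhat m k1 k2 (Zmod m - A) n)"

lemma rhat_swap: "rhat m k1 k2 X n = rhat m k2 k1 X n"
proof -
  have "{(a1, a2). a1 \<in> X \<and> a2 \<in> X \<and> (k2 * a1 + k1 * a2) mod m = n mod m}
        = prod.swap ` {(a1, a2). a1 \<in> X \<and> a2 \<in> X \<and> (k1 * a1 + k2 * a2) mod m = n mod m}"
    by (auto simp: add.commute image_iff)
  then show ?thesis unfolding rhat_def by (simp add: card_image)
qed

lemma balanced_swap: "balanced m k1 k2 A \<longleftrightarrow> balanced m k2 k1 A"
  unfolding balanced_def by (simp add: rhat_swap[of m k1 k2])

subsection \<open>2-adic valuations\<close>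

lemma v2_less_iff:
  fixes k m :: int
  assumes m: "m \<noteq> 0"
  shows "v2 k < v2 m \<longleftrightarrow> \<not> 2 ^ multiplicity 2 m dvd k"
proof (cases "k = 0")
  case False
  have "2 ^ multiplicity 2 m dvd k \<longleftrightarrow> multiplicity 2 m \<le> multiplicity (2::int) k"
    using False by (simp add: power_dvd_iff_le_multiplicity)
  then show ?thesis using False m by (simp add: v2_def not_le)
qed (use m in \<open>simp add: v2_def\<close>)

lemma v2_odd_less:
  fixes k m :: int
  assumes "odd k" "even m" "m \<noteq> 0"
  shows "v2 k < v2 m"
proof -
  have "1 \<le> multiplicity (2::int) m"
    using assms by (intro multiplicity_geI) auto
  then have "2 dvd (2::int) ^ multiplicity 2 m"
    by (simp add: dvd_power)
  then have "\<not> 2 ^ multiplicity 2 m dvd k"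
    using \<open>odd k\<close> by (meson dvd_trans)
  then show ?thesis
    using assms(3) v2_less_iff by blast
qed

lemma not_double_two_part_dvd:
  fixes m :: int
  assumes "m \<noteq> 0"
  shows "\<not> 2 * 2 ^ multiplicity 2 m dvd m"
proof
  assume "2 * 2 ^ multiplicity 2 m dvd m"
  then have "2 ^ Suc (multiplicity 2 m) dvd m" by simp
  then have "Suc (multiplicity 2 m) \<le> multiplicity 2 m"
    using assms by (intro multiplicity_geI) auto
  then show False by simp
qed

(* If the 2-part of m does not divide k, the congruence k c = m/2 (mod m) is solvable:
   the odd cofactor of gcd(k, m) in m would otherwise force the 2-part of m into k. *)
lemma solve_half_congruence:
  fixes k m :: int
  assumes k: "\<not> 2 ^ multiplicity 2 m dvd k"
  shows "\<exists>c. (k * c) mod m = (m div 2) mod m"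
proof -
  define g where "g = gcd k m"
  obtain r where r: "m = g * r" unfolding g_def by (meson gcd_dvd2 dvdE)
  have "even r"
  proof (rule ccontr)
    assume "odd r"
    then have "coprime (2 ^ multiplicity 2 m) r" by simp
    moreover have "2 ^ multiplicity 2 m dvd g * r"
      using multiplicity_dvd[of 2 m] r by simp
    ultimately have "2 ^ multiplicity 2 m dvd g"
      by (simp add: coprime_dvd_mult_left_iff)
    then show False
      using dvd_trans[OF _ gcd_dvd1[of k m]] k unfolding g_def by blast
  qed
  then obtain s where "r = 2 * s" by blast
  then have half: "m div 2 = g * s" using r by simp
  obtain u v where uv: "u * k + v * m = g" unfolding g_def using bezout_int by blast
  have "k * (u * s) = m div 2 + (- (v * s)) * m"
    using half uv[symmetric] by (simp add: algebra_simps)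
  then have "(k * (u * s)) mod m = (m div 2) mod m"
    by (simp only: mod_mult_self1)
  then show ?thesis by blast
qed

subsection \<open>Necessity: counting arguments\<close>

(* Summing the representation function over the multiples of q, when q | m, q | k2 and
   gcd(q, k1) = 1: the pairs counted are exactly those with q | a1. *)
lemma rhat_sum_multiples:
  assumes qm: "q dvd m" and qk: "q dvd k2" and cop: "coprime q k1" and m: "m > 0"
    and X: "X \<subseteq> Zmod m"
  shows "(\<Sum>n \<in> {n \<in> Zmod m. q dvd n}. rhat m k1 k2 X n) = card X * card {x \<in> X. q dvd x}"
proof -
  have fX: "finite X" using X finite_subset unfolding Zmod_def by auto
  define h where "h = (\<lambda>(a1::int, a2::int). (k1 * a1 + k2 * a2) mod m)"
  define T where "T = {n \<in> Zmod m. q dvd n}"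
  define S where "S = {p \<in> X \<times> X. h p \<in> T}"
  have fT: "finite T" unfolding T_def Zmod_def by (rule finite_subset[of _ "{0..<m}"]) auto
  have fS: "finite S" unfolding S_def using fX by auto
  have fibre: "rhat m k1 k2 X n = card {p \<in> S. h p = n}" if "n \<in> T" for n
  proof -
    have nm: "n mod m = n" using that unfolding T_def Zmod_def by auto
    show ?thesis unfolding rhat_def nm
      by (rule arg_cong[where f=card]) (use that in \<open>auto simp: S_def h_def\<close>)
  qed
  have hT: "h (a1, a2) \<in> T \<longleftrightarrow> q dvd a1" for a1 a2
  proof -
    have "q dvd (k1 * a1 + k2 * a2) mod m \<longleftrightarrow> q dvd k1 * a1"
      using qm qk by (simp add: dvd_mod_iff dvd_add_left_iff)
    also have "\<dots> \<longleftrightarrow> q dvd a1"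
      using cop by (simp add: coprime_dvd_mult_right_iff)
    finally show ?thesis
      using m unfolding T_def h_def Zmod_def by auto
  qed
  have "(\<Sum>n \<in> T. rhat m k1 k2 X n) = (\<Sum>n \<in> T. sum (\<lambda>_. 1) {p \<in> S. h p = n})"
    using fibre by simp
  also have "\<dots> = sum (\<lambda>_. 1) S"
    by (rule sum.group[OF fS fT]) (auto simp: S_def)
  also have "\<dots> = card S" by simp
  also have "S = {x \<in> X. q dvd x} \<times> X"
    unfolding S_def using hT by auto
  finally show ?thesis unfolding T_def by (simp add: card_cartesian_product)
qed

lemma card_multiples_Zmod:
  assumes q: "q > 0" and qm: "q dvd m" and m: "m > 0"
  shows "int (card {x \<in> Zmod m. q dvd x}) = m div q"
proof -
  obtain j where j: "m = q * j" using qm by auto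
  have "{x \<in> Zmod m. q dvd x} = (\<lambda>i. q * i) ` {0..<j}"
  proof (intro equalityI subsetI)
    fix x assume x: "x \<in> {x \<in> Zmod m. q dvd x}"
    then obtain i where i: "x = q * i" by (auto simp: Zmod_def)
    have "0 \<le> i" "i < j" using x i j q
      by (auto simp: Zmod_def zero_le_mult_iff mult_less_cancel_left)
    then show "x \<in> (\<lambda>i. q * i) ` {0..<j}" using i by auto
  qed (use q j in \<open>auto simp: Zmod_def mult_less_cancel_left\<close>)
  moreover have "inj_on (\<lambda>i. q * i) {0..<j}" using q by (auto simp: inj_on_def)
  ultimately have "card {x \<in> Zmod m. q dvd x} = nat j" by (simp add: card_image)
  moreover have "j > 0" using j q m by (simp add: zero_less_mult_iff)
  ultimately show ?thesis using j q by simp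
qed

lemma balanced_card:
  assumes m: "m > 0" and bal: "balanced m k1 k2 A"
  shows "card A = card (Zmod m - A)" "m = 2 * int (card A)"
proof -
  let ?B = "Zmod m - A"
  have A: "A \<subseteq> Zmod m" using bal balanced_def by blast
  have total: "(\<Sum>n \<in> {n \<in> Zmod m. 1 dvd n}. rhat m k1 k2 X n) = card X * card X"
    if "X \<subseteq> Zmod m" for X
    using rhat_sum_multiples[of 1 m k2 k1 X] that m by simp
  have "(\<Sum>n \<in> {n \<in> Zmod m. 1 dvd n}. rhat m k1 k2 A n)
        = (\<Sum>n \<in> {n \<in> Zmod m. 1 dvd n}. rhat m k1 k2 ?B n)"
    using bal unfolding balanced_def by (intro sum.cong) auto
  then have "card A * card A = card ?B * card ?B"
    using total[OF A] total[of ?B] by simp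
  then show eq: "card A = card ?B"
    using power_eq_iff_eq_base[of 2 "card A" "card ?B"] by (simp add: power2_eq_square)
  have fin: "finite (Zmod m)" unfolding Zmod_def by simp
  have "card A + card ?B = card (Zmod m)"
    using card_Diff_subset[OF finite_subset[OF A fin] A] card_mono[OF fin A] by simp
  then show "m = 2 * int (card A)" using eq m by (simp add: Zmod_def)
qed

(* Refinement to multiples of q: A and its complement contain equally many multiples of q,
   so the m/q multiples of q in Z_m split evenly. *)
lemma balanced_multiples:
  assumes m: "m > 0" and bal: "balanced m k1 k2 A"
    and q: "q > 0" and qm: "q dvd m" and qk: "q dvd k2" and cop: "coprime q k1"
  shows "m div q = 2 * int (card {x \<in> A. q dvd x})"
proof -
  let ?B = "Zmod m - A"
  have A: "A \<subseteq> Zmod m" using bal balanced_def by blast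
  have cards: "card A = card ?B" "m = 2 * int (card A)" using balanced_card[OF m bal] by auto
  have "(\<Sum>n \<in> {n \<in> Zmod m. q dvd n}. rhat m k1 k2 A n)
        = (\<Sum>n \<in> {n \<in> Zmod m. q dvd n}. rhat m k1 k2 ?B n)"
    using bal unfolding balanced_def by (intro sum.cong) auto
  then have "card ?B * card {x \<in> A. q dvd x} = card ?B * card {x \<in> ?B. q dvd x}"
    using rhat_sum_multiples[OF qm qk cop m A] rhat_sum_multiples[OF qm qk cop m, of ?B] cards(1)
    by simp
  moreover have "card ?B > 0" using cards m by simp
  ultimately have same: "card {x \<in> A. q dvd x} = card {x \<in> ?B. q dvd x}" by simp
  have fin: "finite (Zmod m)" unfolding Zmod_def by simp
  have "{x \<in> Zmod m. q dvd x} = {x \<in> A. q dvd x} \<union> {x \<in> ?B. q dvd x}" using A by auto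
  moreover have "card ({x \<in> A. q dvd x} \<union> {x \<in> ?B. q dvd x})
                 = card {x \<in> A. q dvd x} + card {x \<in> ?B. q dvd x}"
    by (rule card_Un_disjoint) (use A in \<open>auto intro: finite_subset[OF _ fin]\<close>)
  ultimately show ?thesis
    using card_multiples_Zmod[OF q qm m] same by simp
qed

lemma balanced_v2_less:
  assumes m: "m > 0" and bal: "balanced m k1 k2 A" and k1: "odd k1"
  shows "v2 k2 < v2 m"
proof (rule ccontr)
  define q where "q = (2::int) ^ multiplicity 2 m"
  assume "\<not> v2 k2 < v2 m"
  then have qk: "q dvd k2" using m v2_less_iff unfolding q_def by auto
  have qm: "q dvd m" unfolding q_def by (rule multiplicity_dvd)
  have cop: "coprime q k1" using k1 unfolding q_def by simp
  have "m div q = 2 * int (card {x \<in> A. q dvd x})"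
    using balanced_multiples[OF m bal _ qm qk cop] unfolding q_def by simp
  moreover have "m = q * (m div q)" using qm by simp
  ultimately have "m = (2 * q) * int (card {x \<in> A. q dvd x})" by simp
  then have "2 * q dvd m" by (rule dvdI)
  then show False using not_double_two_part_dvd m unfolding q_def by simp
qed

subsection \<open>Sufficiency: the lower half is balanced\<close>

lemma rhat_transport:
  assumes f: "bij_betw f A B" and g: "bij_betw g A B"
    and pres: "\<And>x y. x \<in> A \<Longrightarrow> y \<in> A \<Longrightarrow>
      (k1 * f x + k2 * g y) mod m = (k1 * x + k2 * y) mod m"
  shows "rhat m k1 k2 A n = rhat m k1 k2 B n"
proof -
  define P where "P = (\<lambda>(a1, a2). (k1 * a1 + k2 * a2) mod m = n mod m)"
  have pairs: "{(a1, a2). a1 \<in> X \<and> a2 \<in> X \<and> (k1 * a1 + k2 * a2) mod m = n mod m}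
               = {p \<in> X \<times> X. P p}" for X
    by (auto simp: P_def)
  have "bij_betw (map_prod f g) {p \<in> A \<times> A. P p} {p \<in> B \<times> B. P p}"
    by (rule bij_betw_Collect[OF bij_betw_map_prod[OF f g]]) (auto simp: P_def pres)
  then show ?thesis unfolding rhat_def pairs by (rule bij_betw_same_card)
qed

lemma shift_bij:
  assumes h: "(h::int) > 0"
  shows "bij_betw (\<lambda>y. (y + c) mod h + h) {0..<h} {h..<2*h}"
proof (rule bij_betw_byWitness[where f' = "\<lambda>z. (z - h - c) mod h"])
  show "\<forall>y \<in> {0..<h}. ((y + c) mod h + h - h - c) mod h = y"
    by (simp add: mod_diff_left_eq)
  show "\<forall>z \<in> {h..<2*h}. ((z - h - c) mod h + c) mod h + h = z"
  proof
    fix z assume z: "z \<in> {h..<2*h}"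
    have "((z - h - c) mod h + c) mod h = (z - h) mod h" by (simp add: mod_add_left_eq)
    also have "\<dots> = z - h" using z by (intro mod_pos_pos_trivial) auto
    finally show "((z - h - c) mod h + c) mod h + h = z" by simp
  qed
qed (use h in auto)

lemma translate_bij:
  assumes h: "(h::int) > 0"
  shows "bij_betw (\<lambda>y. y + h) {0..<h} {h..<2*h}"
  using shift_bij[OF h, of 0] by (rule bij_betw_cong[THEN iffD1, rotated]) simp

lemma lower_half_balanced:
  assumes mh: "m = 2 * h" and h: "h > 0"
    and g: "bij_betw g {0..<h} {h..<2*h}"
    and pres: "\<And>y. y \<in> {0..<h} \<Longrightarrow> m dvd k1 * h + k2 * g y - k2 * y"
  shows "balanced m k1 k2 {0..<h}"
proof -
  have complement: "Zmod m - {0..<h} = {h..<2*h}" using mh h by (auto simp: Zmod_def)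
  have preserves: "(k1 * (x + h) + k2 * g y) mod m = (k1 * x + k2 * y) mod m"
    if "y \<in> {0..<h}" for x y
  proof -
    have diff: "k1 * (x + h) + k2 * g y - (k1 * x + k2 * y) = k1 * h + k2 * g y - k2 * y"
      by (simp add: algebra_simps)
    show ?thesis unfolding mod_eq_dvd_iff diff by (rule pres[OF that])
  qed
  have "rhat m k1 k2 {0..<h} n = rhat m k1 k2 {h..<2*h} n" for n
    by (rule rhat_transport[OF translate_bij[OF h] g preserves])
  moreover have "{0..<h} \<subseteq> Zmod m" using mh by (auto simp: Zmod_def)
  ultimately show ?thesis unfolding balanced_def complement by blast
qed

(* Same parity: translating both coordinates by h adds (k1 + k2) h, a multiple of m. *)
lemma balanced_same_parity:
  assumes m: "m > 0" "even m" and k: "even k1 \<longleftrightarrow> even k2"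
  shows "balanced m k1 k2 {0..<m div 2}"
proof -
  define h where "h = m div 2"
  have mh: "m = 2 * h" and h: "h > 0" unfolding h_def using m by auto
  obtain j where j: "k1 + k2 = 2 * j" using k by (metis even_add evenE)
  have "k1 * h + k2 * (y + h) - k2 * y = j * m" for y
  proof -
    have "k1 * h + k2 * (y + h) - k2 * y = (k1 + k2) * h" by (simp add: algebra_simps)
    then show ?thesis using j mh by simp
  qed
  then show ?thesis unfolding h_def[symmetric]
    by (intro lower_half_balanced[OF mh h translate_bij[OF h]]) simp
qed

(* Different parity, k1 odd: shift the second coordinate by c with k2 c = h (mod m).  The
   error terms (k1 + 1) h, k2 h and k2 c - h are then all multiples of m. *)
lemma balanced_odd_even:
  assumes m: "m > 0" "even m" and k1: "odd k1" and k2: "even k2" and v: "v2 k2 < v2 m"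
  shows "balanced m k1 k2 {0..<m div 2}"
proof -
  define h where "h = m div 2"
  have mh: "m = 2 * h" and h: "h > 0" unfolding h_def using m by auto
  have "\<not> 2 ^ multiplicity 2 m dvd k2" using v v2_less_iff m by simp
  then obtain c where "(k2 * c) mod m = h mod m"
    using solve_half_congruence unfolding h_def by blast
  then have c: "m dvd k2 * c - h" by (simp add: mod_eq_dvd_iff)
  have k2h: "m dvd k2 * h" using k2 mh by auto
  have k1h: "m dvd (k1 + 1) * h" using k1 mh by auto
  have "m dvd k1 * h + k2 * ((y + c) mod h + h) - k2 * y" for y
  proof -
    define D where "D = (y + c) div h"
    have r: "(y + c) mod h = y + c - D * h"
      unfolding D_def by (simp add: minus_div_mult_eq_mod)
    have "k1 * h + k2 * ((y + c) mod h + h) - k2 * y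
          = (k1 + 1) * h + (k2 * h) * (1 - D) + (k2 * c - h)"
      unfolding r by (simp add: algebra_simps)
    then show ?thesis using k1h k2h c by simp
  qed
  then show ?thesis unfolding h_def[symmetric]
    by (intro lower_half_balanced[OF mh h shift_bij[OF h]])
qed

lemma odd_even_balanced_iff:
  assumes m: "m > 0" "even m" and k1: "odd k1" and k2: "even k2"
  shows "(\<exists>A. balanced m k1 k2 A) \<longleftrightarrow> v2 k2 < v2 m"
  using balanced_v2_less balanced_odd_even assms by blast

theorem corollary1:
  fixes m k1 k2 :: int
  assumes "m \<ge> 2"
  shows "(\<exists>A \<subseteq> Zmod m. \<forall>n \<in> Zmod m. rhat m k1 k2 A n = rhat m k1 k2 (Zmod m - A) n)
     \<longleftrightarrow> even m \<and> ((even k1 \<longleftrightarrow> even k2)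
            \<or> ((even k1 \<noteq> even k2) \<and> v2 k1 < v2 m \<and> v2 k2 < v2 m))"
proof -
  have m: "m > 0" using assms by simp
  have "(\<exists>A. balanced m k1 k2 A) \<longleftrightarrow> even m \<and> ((even k1 \<longleftrightarrow> even k2)
            \<or> ((even k1 \<noteq> even k2) \<and> v2 k1 < v2 m \<and> v2 k2 < v2 m))"
  proof (cases "even m")
    case False
    then have "\<not> balanced m k1 k2 A" for A using balanced_card(2)[OF m, of k1 k2 A] by auto
    with False show ?thesis by blast
  next
    case even: True
    consider (same) "even k1 \<longleftrightarrow> even k2" | (odd_even) "odd k1" "even k2"
      | (even_odd) "even k1" "odd k2" by blast
    then show ?thesis
    proof cases
      case same
      then show ?thesis using balanced_same_parity[OF m even same] even by blast
    next
      case odd_even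
      have "v2 k1 < v2 m" using v2_odd_less[OF odd_even(1) even] m by simp
      then show ?thesis using odd_even_balanced_iff[OF m even odd_even] odd_even even by simp
    next
      case even_odd
      have "v2 k2 < v2 m" using v2_odd_less[OF even_odd(2) even] m by simp
      moreover have "(\<exists>A. balanced m k1 k2 A) \<longleftrightarrow> (\<exists>A. balanced m k2 k1 A)"
        using balanced_swap by blast
      ultimately show ?thesis
        using odd_even_balanced_iff[OF m even even_odd(2,1)] even_odd even by simp
    qed
  qed
  then show ?thesis unfolding balanced_def by blast
qed

end
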